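(* For the path $P_n$ on $n\ge 2$ vertices, $b_{OCD}(P_n)=1$ if $n=2$, $b_{OCD}(P_n)=2$ if $n=3$, and $b_{OCD}(P_n)=\lceil n/3\rceil-1$ if $n\ge 4$.
   Context: A set $S\subseteq V$ is a dominating set of a graph $G=(V,E)$ if every vertex not in $S$ is adjacent to a vertex of $S$. A set $\tilde D\subseteq V$ is an outer-connected dominating set of $G$ if $\tilde D$ is dominating and the induced subgraph $G[V\setminus\tilde D]$ is connected (the empty graph counts as connected). $\tilde\gamma_c(G)$ is the minimum size of an outer-connected dominating set. For a graph $G$ without isolated vertices, the outer-connected bondage number $b_{OCD}(G)$ is the minimum number of edges whose removal from $G$ yields a graph $G'$ with $\tilde\gamma_c(G')>\tilde\gamma_c(G)$. *)

theory Defs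
  imports Complex_Main
begin

text \<open>A finite simple graph is given by a vertex set V and an edge set E of
  two-element subsets of V.  Edge removal yields (V, E - F).\<close>

definition dominating :: "'a set \<Rightarrow> 'a set set \<Rightarrow> 'a set \<Rightarrow> bool" where
  "dominating V E S \<longleftrightarrow> S \<subseteq> V \<and> (\<forall>v \<in> V - S. \<exists>u \<in> S. {u, v} \<in> E)"

text \<open>The induced subgraph G[W] is connected (the empty graph counts as connected).\<close>
definition induced_connected :: "'a set set \<Rightarrow> 'a set \<Rightarrow> bool" where
  "induced_connected E W \<longleftrightarrow>
     (\<forall>x \<in> W. \<forall>y \<in> W. (\<lambda>a b. a \<in> W \<and> b \<in> W \<and> {a, b} \<in> E)\<^sup>*\<^sup>* x y)"

definition outer_connected_dominating :: "'a set \<Rightarrow> 'a set set \<Rightarrow> 'a set \<Rightarrow> bool" where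
  "outer_connected_dominating V E D \<longleftrightarrow> dominating V E D \<and> induced_connected E (V - D)"

definition gamma_oc :: "'a set \<Rightarrow> 'a set set \<Rightarrow> nat" where
  "gamma_oc V E = (LEAST k. \<exists>D. outer_connected_dominating V E D \<and> card D = k)"

definition b_OCD :: "'a set \<Rightarrow> 'a set set \<Rightarrow> nat" where
  "b_OCD V E = (LEAST k. \<exists>F. F \<subseteq> E \<and> card F = k \<and> gamma_oc V (E - F) > gamma_oc V E)"

definition path_V :: "nat \<Rightarrow> nat set" where
  "path_V n = {0..<n}"

definition path_E :: "nat \<Rightarrow> nat set set" where
  "path_E n = {{i, Suc i} | i. Suc i < n}"

end

theory Submission
  imports Defs
begin

text \<open>Let \<open>D\<close> be an outer-connected dominating set of a spanning subgraph of \<open>P\<^sub>n\<close> and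
  \<open>W\<close> its complement. Being connected, \<open>W\<close> is an interval, and every vertex of \<open>W\<close> needs a
  neighbour outside \<open>W\<close>; an inner vertex of an interval has none, so \<open>|W| \<le> 2\<close>, and
  \<open>|W| = 2\<close> needs a subpath \<open>P\<^sub>4\<close> around it. Hence \<open>\<gamma>\<close> is \<open>n - 2\<close>, \<open>n - 1\<close> or \<open>n\<close>
  according as the subgraph contains a \<open>P\<^sub>4\<close>, is a nonempty \<open>P\<^sub>4\<close>-free graph, or has no
  edges. For \<open>n \<le> 3\<close> all \<open>n - 1\<close> edges must go; for \<open>n \<ge> 4\<close> one must destroy every
  \<open>P\<^sub>4\<close>: removing every third edge does it, and the \<open>(n - 1) div 3\<close> disjoint windows of three
  consecutive edges each have to lose one.\<close>

definition path_edge :: "nat \<Rightarrow> nat set" where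
  "path_edge i = {i, Suc i}"

lemma path_E_eq_image: "path_E n = path_edge ` {..<n - 1}"
  unfolding path_E_def path_edge_def by fastforce

lemma path_edge_in_path_E_iff: "path_edge i \<in> path_E n \<longleftrightarrow> Suc i < n"
  unfolding path_E_eq_image by (auto simp: path_edge_def doubleton_eq_iff)

lemma doubleton_in_path_E: "{a, b} \<in> path_E n \<Longrightarrow> b = Suc a \<or> a = Suc b"
  unfolding path_E_def by (auto simp: doubleton_eq_iff)

lemma Min_path_edge [simp]: "Min (path_edge i) = i"
  by (simp add: path_edge_def)

lemma finite_path_E: "finite (path_E n)"
  unfolding path_E_eq_image by simp

lemma card_path_E: "card (path_E n) = n - 1"
proof -
  have "inj path_edge" by (rule injI) (auto simp: path_edge_def doubleton_eq_iff)
  then show ?thesis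
    unfolding path_E_eq_image by (simp add: card_image inj_on_subset)
qed

lemma card_path_V: "card (path_V n) = n"
  by (simp add: path_V_def)

definition contains_P4 :: "nat set set \<Rightarrow> bool" where
  "contains_P4 E \<longleftrightarrow>
     (\<exists>j. path_edge j \<in> E \<and> path_edge (Suc j) \<in> E \<and> path_edge (Suc (Suc j)) \<in> E)"

lemma contains_P4_mono: "contains_P4 E \<Longrightarrow> E \<subseteq> E' \<Longrightarrow> contains_P4 E'"
  unfolding contains_P4_def by blast

lemma contains_P4_path_E_iff: "contains_P4 (path_E n) \<longleftrightarrow> 4 \<le> n"
proof
  show "4 \<le> n" if "contains_P4 (path_E n)"
    using that unfolding contains_P4_def path_edge_in_path_E_iff by auto
  show "contains_P4 (path_E n)" if "4 \<le> n"
    using that unfolding contains_P4_def path_edge_in_path_E_iff by (intro exI[of _ 0]) simp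
qed

lemma path_walk_crosses:
  assumes "E' \<subseteq> path_E n"
    and "(\<lambda>a b. a \<in> W \<and> b \<in> W \<and> {a, b} \<in> E')\<^sup>*\<^sup>* x y" and "x \<le> z" and "z < y"
  shows "z \<in> W \<and> Suc z \<in> W \<and> path_edge z \<in> E'"
  using assms(2,4)
proof (induction rule: rtranclp_induct)
  case base
  then show ?case using assms(3) by simp
next
  case (step y y')
  then have "y' = Suc y \<or> y = Suc y'" using assms(1) doubleton_in_path_E by blast
  then show ?case
  proof
    assume "y' = Suc y"
    then show ?thesis using step by (cases "z = y") (auto simp: path_edge_def)
  next
    assume "y = Suc y'"
    then show ?thesis using step by simp
  qed
qed

lemma path_ocd_outer_set:
  assumes sub: "E' \<subseteq> path_E n" and ocd: "outer_connected_dominating (path_V n) E' D"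
  defines "W \<equiv> path_V n - D"
  shows "card W \<le> 2" and "card W = 2 \<Longrightarrow> contains_P4 E'" and "W \<noteq> {} \<Longrightarrow> E' \<noteq> {}"
proof -
  have dom: "\<And>v. v \<in> W \<Longrightarrow> \<exists>u\<in>D. {u, v} \<in> E'"
    using ocd unfolding outer_connected_dominating_def dominating_def W_def by blast
  have cross: "\<And>a c z. a \<in> W \<Longrightarrow> c \<in> W \<Longrightarrow> a \<le> z \<Longrightarrow> z < c
      \<Longrightarrow> z \<in> W \<and> Suc z \<in> W \<and> path_edge z \<in> E'"
  proof -
    fix a c z assume ac: "a \<in> W" "c \<in> W" and z: "a \<le> z" "z < c"
    have "induced_connected E' W"
      using ocd unfolding outer_connected_dominating_def W_def by simp
    then have "(\<lambda>x y. x \<in> W \<and> y \<in> W \<and> {x, y} \<in> E')\<^sup>*\<^sup>* a c"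
      using ac unfolding induced_connected_def by blast
    from path_walk_crosses[OF sub this z]
    show "z \<in> W \<and> Suc z \<in> W \<and> path_edge z \<in> E'" .
  qed
  have no_middle: False if "a \<in> W" "c \<in> W" "a < b" "b < c" for a b c
  proof -
    \<comment> \<open>the dominator of \<open>b\<close> is a neighbour of \<open>b\<close>, hence lies between \<open>a\<close> and \<open>c\<close>\<close>
    have "b \<in> W" using cross[OF that(1,2)] that(3,4) by simp
    then obtain u where u: "u \<in> D" "{u, b} \<in> E'" using dom by blast
    then have "b = Suc u \<or> u = Suc b" using sub doubleton_in_path_E by blast
    then have "u \<in> W" using cross[OF that(1,2), of b] cross[OF that(1,2), of u] that(3,4) by auto
    then show False using u(1) unfolding W_def by blast
  qed
  have fin: "finite W" unfolding W_def path_V_def by simp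
  have W_ends: "W \<subseteq> {Min W, Max W}"
  proof
    fix b assume b: "b \<in> W"
    then have "Min W \<le> b" "b \<le> Max W" "Min W \<in> W" "Max W \<in> W"
      using fin by (auto intro: Min_in Max_in)
    then show "b \<in> {Min W, Max W}" using no_middle by (metis insertCI le_neq_implies_less)
  qed
  have "card W \<le> card {Min W, Max W}" using W_ends by (rule card_mono[rotated]) simp
  also have "\<dots> \<le> 2" by (simp add: card_insert_if)
  finally show "card W \<le> 2" .
  show "contains_P4 E'" if "card W = 2"
  proof -
    define a c where "a = Min W" and "c = Max W"
    have "a \<noteq> c"
    proof
      assume "a = c"
      then have "card W \<le> card {a}" using W_ends unfolding a_def c_def by (intro card_mono) auto
      then show False using that by simp
    qed
    then have W: "W = {a, c}"
      using W_ends that unfolding a_def c_def by (intro card_subset_eq) auto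
    have aW: "a \<in> W" and cW: "c \<in> W" using W by auto
    have "a < c" using \<open>a \<noteq> c\<close> Min_le[OF fin cW] unfolding a_def by simp
    have c: "c = Suc a"
      using no_middle[OF aW cW, of "Suc a"] \<open>a < c\<close> by fastforce
    obtain u where u: "u \<in> D" "{u, a} \<in> E'" using dom aW by blast
    obtain u' where u': "u' \<in> D" "{u', c} \<in> E'" using dom cW by blast
    have "a = Suc u"
      using doubleton_in_path_E[of u a n] u sub cW c unfolding W_def by blast
    moreover have "u' = Suc c"
      using doubleton_in_path_E[of u' c n] u' sub aW c unfolding W_def by blast
    moreover have "path_edge a \<in> E'" using cross[OF aW cW] \<open>a < c\<close> by blast
    ultimately show ?thesis
      unfolding contains_P4_def path_edge_def using u(2) u'(2) c
      by (intro exI[of _ u]) (simp add: insert_commute)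
  qed
  show "E' \<noteq> {}" if "W \<noteq> {}" using that dom by blast
qed

lemma ocd_whole: "outer_connected_dominating V E V"
  by (simp add: outer_connected_dominating_def dominating_def induced_connected_def)

lemma ocd_remove_vertex:
  assumes "{u, v} \<in> E" "u \<in> V" "u \<noteq> v"
  shows "outer_connected_dominating V E (V - {v})"
  using assms unfolding outer_connected_dominating_def dominating_def induced_connected_def
  by auto

lemma ocd_remove_edge:
  assumes "{v, w} \<in> E" "{u, v} \<in> E" "{u', w} \<in> E" "u \<in> V - {v, w}" "u' \<in> V - {v, w}"
  shows "outer_connected_dominating V E (V - {v, w})"
  unfolding outer_connected_dominating_def dominating_def induced_connected_def
proof (intro conjI ballI)
  show "\<exists>x\<in>V - {v, w}. {x, y} \<in> E" if "y \<in> V - (V - {v, w})" for y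
    using that assms(2-5) by auto
  show "(\<lambda>a b. a \<in> V - (V - {v, w}) \<and> b \<in> V - (V - {v, w}) \<and> {a, b} \<in> E)\<^sup>*\<^sup>* x y"
    if "x \<in> V - (V - {v, w})" "y \<in> V - (V - {v, w})" for x y
    using that assms(1) by (auto simp: insert_commute)
qed auto

lemma gamma_oc_le: "outer_connected_dominating V E D \<Longrightarrow> gamma_oc V E \<le> card D"
  unfolding gamma_oc_def by (auto intro: Least_le)

lemma gamma_oc_attained: "\<exists>D. outer_connected_dominating V E D \<and> card D = gamma_oc V E"
  unfolding gamma_oc_def by (rule LeastI_ex) (use ocd_whole in blast)

lemma b_OCD_eqI:
  assumes "F0 \<subseteq> E" "gamma_oc V E < gamma_oc V (E - F0)" "card F0 = k"
    and "\<And>F. F \<subseteq> E \<Longrightarrow> gamma_oc V E < gamma_oc V (E - F) \<Longrightarrow> k \<le> card F"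
  shows "b_OCD V E = k"
  unfolding b_OCD_def by (rule Least_equality) (use assms in auto)

lemma gamma_oc_path_lower:
  assumes "E' \<subseteq> path_E n"
  shows "n \<le> gamma_oc (path_V n) E' + 2"
    and "\<not> contains_P4 E' \<Longrightarrow> n \<le> gamma_oc (path_V n) E' + 1"
    and "E' = {} \<Longrightarrow> n \<le> gamma_oc (path_V n) E'"
proof -
  obtain D where D: "outer_connected_dominating (path_V n) E' D" "card D = gamma_oc (path_V n) E'"
    using gamma_oc_attained by blast
  have "D \<subseteq> path_V n" using D(1) unfolding outer_connected_dominating_def dominating_def by simp
  then have "n = gamma_oc (path_V n) E' + card (path_V n - D)"
    using D(2) card_path_V[of n] card_mono[of "path_V n" D]
    by (simp add: card_Diff_subset finite_subset path_V_def)
  with path_ocd_outer_set[OF assms D(1)]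
  show "n \<le> gamma_oc (path_V n) E' + 2"
    and "\<not> contains_P4 E' \<Longrightarrow> n \<le> gamma_oc (path_V n) E' + 1"
    and "E' = {} \<Longrightarrow> n \<le> gamma_oc (path_V n) E'"
    by (fastforce simp: card_eq_0_iff)+
qed

lemma gamma_oc_path_P4:
  assumes "E' \<subseteq> path_E n" "contains_P4 E'"
  shows "gamma_oc (path_V n) E' = n - 2"
proof -
  obtain j where j: "path_edge j \<in> E'" "path_edge (Suc j) \<in> E'" "path_edge (Suc (Suc j)) \<in> E'"
    using assms(2) unfolding contains_P4_def by blast
  then have "Suc (Suc (Suc j)) < n" using assms(1) path_edge_in_path_E_iff by blast
  have "outer_connected_dominating (path_V n) E' (path_V n - {Suc j, Suc (Suc j)})"
    by (rule ocd_remove_edge[where u = j and u' = "Suc (Suc (Suc j))"])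
      (use j \<open>Suc (Suc (Suc j)) < n\<close> in \<open>auto simp: path_edge_def path_V_def insert_commute\<close>)
  from gamma_oc_le[OF this] have "gamma_oc (path_V n) E' \<le> n - 2"
    using \<open>Suc (Suc (Suc j)) < n\<close> by (simp add: card_Diff_subset path_V_def)
  then show ?thesis using gamma_oc_path_lower(1)[OF assms(1)] by linarith
qed

lemma gamma_oc_path_P4_free:
  assumes "E' \<subseteq> path_E n" "\<not> contains_P4 E'" "E' \<noteq> {}"
  shows "gamma_oc (path_V n) E' = n - 1"
proof -
  obtain e where "e \<in> E'" using assms(3) by blast
  then obtain i where i: "path_edge i \<in> E'" "Suc i < n"
    using assms(1) unfolding path_E_eq_image by auto
  have "outer_connected_dominating (path_V n) E' (path_V n - {i})"
    by (rule ocd_remove_vertex[where u = "Suc i"])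
      (use i in \<open>auto simp: path_edge_def path_V_def insert_commute\<close>)
  from gamma_oc_le[OF this] have "gamma_oc (path_V n) E' \<le> n - 1"
    using i(2) by (simp add: path_V_def)
  then show ?thesis using gamma_oc_path_lower(2)[OF assms(1,2)] by linarith
qed

lemma gamma_oc_path_empty: "gamma_oc (path_V n) {} = n"
  using gamma_oc_le[OF ocd_whole, of "path_V n" "{}"] gamma_oc_path_lower(3)[of "{}" n]
  by (simp add: card_path_V)

lemma b_OCD_short_path:
  assumes "2 \<le> n" "n \<le> 3"
  shows "b_OCD (path_V n) (path_E n) = n - 1"
proof -
  have P4_free: "\<not> contains_P4 E'" if "E' \<subseteq> path_E n" for E'
    using contains_P4_mono[OF _ that] contains_P4_path_E_iff assms(2) by auto
  have "path_edge 0 \<in> path_E n" using assms(1) path_edge_in_path_E_iff by simp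
  then have gamma_E: "gamma_oc (path_V n) (path_E n) = n - 1"
    using gamma_oc_path_P4_free[OF subset_refl P4_free] by blast
  show ?thesis
  proof (rule b_OCD_eqI[of "path_E n"])
    show "gamma_oc (path_V n) (path_E n) < gamma_oc (path_V n) (path_E n - path_E n)"
      using gamma_E gamma_oc_path_empty assms(1) by simp
  next
    fix F assume F: "F \<subseteq> path_E n"
      and increase: "gamma_oc (path_V n) (path_E n) < gamma_oc (path_V n) (path_E n - F)"
    have "path_E n - F = {}"
      using gamma_oc_path_P4_free[OF Diff_subset P4_free[OF Diff_subset]] gamma_E increase
      by fastforce
    then have "F = path_E n" using F by blast
    then show "n - 1 \<le> card F" by (simp add: card_path_E)
  qed (simp_all add: card_path_E)
qed

lemma P4_free_remove_every_third_edge: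
  "\<not> contains_P4 (path_E n - (\<lambda>k. path_edge (3 * k + 2)) ` {..<(n - 1) div 3})"
  (is "\<not> contains_P4 (path_E n - ?F)")
proof
  assume "contains_P4 (path_E n - ?F)"
  then obtain j where j: "path_edge j \<in> path_E n - ?F" "path_edge (Suc j) \<in> path_E n - ?F"
      "path_edge (Suc (Suc j)) \<in> path_E n - ?F"
    unfolding contains_P4_def by blast
  obtain i where i: "path_edge i \<in> path_E n - ?F" "i mod 3 = 2"
  proof -
    have "j mod 3 = 2 \<or> Suc j mod 3 = 2 \<or> Suc (Suc j) mod 3 = 2" by presburger
    then show thesis using that j by blast
  qed
  define q where "q = i div 3"
  have i_eq: "i = 3 * q + 2" unfolding q_def using i(2) by presburger
  have "Suc i < n" using i(1) by (simp add: path_edge_in_path_E_iff)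
  then have "q < (n - 1) div 3"
    unfolding i_eq using less_eq_div_iff_mult_less_eq[of 3 "Suc q" "n - 1"] by simp
  then show False using i(1) unfolding i_eq by blast
qed

lemma P4_hitting_set_card_ge:
  assumes "F \<subseteq> path_E n" "\<not> contains_P4 (path_E n - F)"
  shows "(n - 1) div 3 \<le> card F"
proof -
  have "{..<(n - 1) div 3} \<subseteq> (\<lambda>e. Min e div 3) ` F"
  proof
    fix k assume "k \<in> {..<(n - 1) div 3}"
    then have "3 * k + 3 < n" using less_eq_div_iff_mult_less_eq[of 3 "Suc k" "n - 1"] by simp
    then have "path_edge (3 * k + r) \<in> path_E n" if "r < 3" for r
      using that by (simp add: path_edge_in_path_E_iff)
    moreover have "\<not> (\<forall>r<3. path_edge (3 * k + r) \<in> path_E n - F)"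
      using assms(2) unfolding contains_P4_def
      by (metis add_0_right add_Suc_right numeral_2_eq_2 numeral_3_eq_3 lessI less_SucI)
    ultimately obtain r where "r < 3" "path_edge (3 * k + r) \<in> F" by blast
    moreover have "Min (path_edge (3 * k + r)) div 3 = k" using \<open>r < 3\<close> by simp
    ultimately show "k \<in> (\<lambda>e. Min e div 3) ` F" by (metis imageI)
  qed
  moreover have "finite F" using assms(1) finite_path_E by (rule finite_subset)
  ultimately have "card {..<(n - 1) div 3} \<le> card ((\<lambda>e. Min e div 3) ` F)"
    by (intro card_mono) auto
  also have "\<dots> \<le> card F" using \<open>finite F\<close> by (rule card_image_le)
  finally show ?thesis by simp
qed

lemma b_OCD_long_path:
  assumes "4 \<le> n"
  shows "b_OCD (path_V n) (path_E n) = (n - 1) div 3"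
proof -
  have gamma_E: "gamma_oc (path_V n) (path_E n) = n - 2"
    using gamma_oc_path_P4 contains_P4_path_E_iff assms by blast
  have increase_iff: "gamma_oc (path_V n) (path_E n) < gamma_oc (path_V n) (path_E n - F)
      \<longleftrightarrow> \<not> contains_P4 (path_E n - F)" for F
  proof
    assume "gamma_oc (path_V n) (path_E n) < gamma_oc (path_V n) (path_E n - F)"
    then show "\<not> contains_P4 (path_E n - F)"
      using gamma_oc_path_P4[OF Diff_subset] gamma_E by auto
  next
    assume "\<not> contains_P4 (path_E n - F)"
    from gamma_oc_path_lower(2)[OF Diff_subset this]
    show "gamma_oc (path_V n) (path_E n) < gamma_oc (path_V n) (path_E n - F)"
      using gamma_E assms by linarith
  qed
  let ?F = "(\<lambda>k. path_edge (3 * k + 2)) ` {..<(n - 1) div 3}"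
  show ?thesis
  proof (rule b_OCD_eqI[of ?F])
    show "?F \<subseteq> path_E n"
    proof
      fix e assume "e \<in> ?F"
      then obtain k where "k < (n - 1) div 3" "e = path_edge (3 * k + 2)" by blast
      then show "e \<in> path_E n"
        using less_eq_div_iff_mult_less_eq[of 3 "Suc k" "n - 1"]
        by (simp add: path_edge_in_path_E_iff)
    qed
    have "inj (\<lambda>k. path_edge (3 * k + 2))"
      by (rule injI) (auto simp: path_edge_def doubleton_eq_iff)
    then show "card ?F = (n - 1) div 3" by (simp add: card_image inj_on_subset)
    show "gamma_oc (path_V n) (path_E n) < gamma_oc (path_V n) (path_E n - ?F)"
      using increase_iff P4_free_remove_every_third_edge by blast
    show "(n - 1) div 3 \<le> card F"
      if "F \<subseteq> path_E n" "gamma_oc (path_V n) (path_E n) < gamma_oc (path_V n) (path_E n - F)" for F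
      using that increase_iff P4_hitting_set_card_ge by blast
  qed
qed

lemma ceiling_third_minus_one:
  assumes "1 \<le> n"
  shows "\<lceil>real n / 3\<rceil> - 1 = int ((n - 1) div 3)"
proof -
  define q where "q = (n - 1) div 3"
  have "3 * q + 1 \<le> n" "n \<le> 3 * q + 3" unfolding q_def using assms by linarith+
  then have "real (3 * q + 1) \<le> real n" "real n \<le> real (3 * q + 3)" by (simp_all only: of_nat_le_iff)
  then have "\<lceil>real n / 3\<rceil> = int q + 1" by (intro ceiling_unique) auto
  then show ?thesis unfolding q_def by simp
qed

theorem mainTheorem10:
  fixes n :: nat
  assumes "n \<ge> 2"
  shows "(n = 2 \<longrightarrow> b_OCD (path_V n) (path_E n) = 1)
       \<and> (n = 3 \<longrightarrow> b_OCD (path_V n) (path_E n) = 2)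
       \<and> (n \<ge> 4 \<longrightarrow> int (b_OCD (path_V n) (path_E n)) = \<lceil>real n / 3\<rceil> - 1)"
  using b_OCD_short_path[of n] b_OCD_long_path[of n] ceiling_third_minus_one[of n] assms
  by auto

end
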